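(* Let $K$ be an idempotent, linearly ordered, archimedian, commutative semiring. A series $S\in K[[X]]$ is rational if and only if it is a merge of finitely many ultimately geometric series. Equivalently, $S$ is rational if and only if there exist integers $\kappa\geq0$, $c\geq1$, a polynomial $P\in K[X]$ of degree less than $\kappa c$, and elements $u_0,\dots,u_{c-1},q_0,\dots,q_{c-1}\in K$ such that $$S=P\oplus X^{\kappa c}\Big(\bigoplus_{0\leq i\leq c-1}u_iX^i(q_iX^c)^*\Big).$$
   Context: $K$ is idempotent if $u\oplus u=u$; linearly ordered if $u\leq v\iff u\oplus v=v$ is a total order; archimedian if for all $u,v,\lambda,\mu\in K$, ($u\lambda^k\geq v\mu^k$ for all $k\geq0$) implies $v=\mathbb{0}$ or $\lambda\geq\mu$; commutative if $uv=vu$. $K[[X]]$ is the semiring of formal power series with coefficientwise sum and Cauchy product; $\langle S,X^k\rangle$ denotes the $k$-th coefficient of $S$; $U^*=\bigoplus_{k\ge0}U^k$ for $U$ with zero constant coefficient. Rational series: smallest subset of $K[[X]]$ containing $K[X]$ and closed under sum, product and star. A series $S$ is ultimately geometric if there exist an integer $\kappa$ and $\gamma\in K$ with $\langle S,X^{k+1}\rangle=\gamma\langle S,X^k\rangle$ for all $k\geq\kappa$. The merge of $c\ge1$ series $S^{(0)},\dots,S^{(c-1)}$ is the series $S^{(0)}(X^c)\oplus XS^{(1)}(X^c)\oplus\cdots\oplus X^{c-1}S^{(c-1)}(X^c)$ (its coefficient of $X^{kc+j}$ is $\langle S^{(j)},X^k\rangle$). *)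

theory Defs
  imports "HOL-Computational_Algebra.Polynomial_FPS"
begin

definition nat_le :: "'a::comm_semiring_1 \<Rightarrow> 'a \<Rightarrow> bool" where
  "nat_le u v \<longleftrightarrow> u + v = v"

definition idempotent_sr :: "'a::comm_semiring_1 itself \<Rightarrow> bool" where
  "idempotent_sr _ \<longleftrightarrow> (\<forall>u::'a. u + u = u)"

definition linearly_ordered_sr :: "'a::comm_semiring_1 itself \<Rightarrow> bool" where
  "linearly_ordered_sr _ \<longleftrightarrow> (\<forall>u v::'a. nat_le u v \<or> nat_le v u)"

definition archimedian_sr :: "'a::comm_semiring_1 itself \<Rightarrow> bool" where
  "archimedian_sr _ \<longleftrightarrow> (\<forall>u v lam mu :: 'a.
      (\<forall>k::nat. nat_le (v * mu ^ k) (u * lam ^ k)) \<longrightarrow> v = 0 \<or> nat_le mu lam)"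

text \<open>Kleene star of a series with zero constant coefficient:
  U^* = sum over k of U^k; the coefficient of X^n only receives contributions from k \<le> n.\<close>

definition fps_star :: "'a::comm_semiring_1 fps \<Rightarrow> 'a fps" where
  "fps_star U = Abs_fps (\<lambda>n. \<Sum>k\<le>n. fps_nth (U ^ k) n)"

inductive rational_fps :: "'a::comm_semiring_1 fps \<Rightarrow> bool" where
  poly: "rational_fps (fps_of_poly p)"
| plus: "rational_fps S \<Longrightarrow> rational_fps T \<Longrightarrow> rational_fps (S + T)"
| times: "rational_fps S \<Longrightarrow> rational_fps T \<Longrightarrow> rational_fps (S * T)"
| star: "rational_fps U \<Longrightarrow> fps_nth U 0 = 0 \<Longrightarrow> rational_fps (fps_star U)"

definition ultimately_geometric :: "'a::comm_semiring_1 fps \<Rightarrow> bool" where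
  "ultimately_geometric S \<longleftrightarrow>
     (\<exists>(\<kappa>::nat) \<gamma>. \<forall>k\<ge>\<kappa>. fps_nth S (k + 1) = \<gamma> * fps_nth S k)"

definition merge_fps :: "nat \<Rightarrow> (nat \<Rightarrow> 'a::comm_semiring_1 fps) \<Rightarrow> 'a fps" where
  "merge_fps c F = Abs_fps (\<lambda>n. fps_nth (F (n mod c)) (n div c))"

end

theory Submission
  imports Defs
begin

(* Over an idempotent, linearly ordered commutative semiring, with geom q c = (q X^c)^*,
   the theorem follows from a cycle of implications.
   (1) Call S elementary if it is a finite sum of terms u X^m geom q c with c \<ge> 1.  Polynomials
       are elementary, and idempotency gives (A + B)^* = A^* B^*; with this, elementary series
       are closed under product and under the star of series with zero constant term.  Hence
       every rational series is elementary.
   (2) S is periodically geometric with period c if each subsequence (S_(r + k c))_k is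
       ultimately geometric.  Elementary terms are; refining periods and using the linear order
       (eventually one of two ultimately geometric sequences dominates) this passes to sums.
   (3) A periodically geometric series is the merge of its subsequences, a merge of ultimately
       geometric series has the normal form P + X^(\<kappa> c) \<Sum>_(i<c) u_i X^i geom q_i c, and every
       series of that normal form is visibly rational. *)

unbundle fps_syntax


section \<open>The star of a power series\<close>

lemma fps_mult_nth_cong:
  fixes A B C :: "'a::comm_semiring_1 fps"
  assumes "\<And>j. j \<le> n \<Longrightarrow> A $ j = B $ j"
  shows "(C * A) $ n = (C * B) $ n"
  unfolding fps_mult_nth by (rule sum.cong) (auto simp: assms)

lemma fps_linear_equation_unique:
  fixes U A Y1 Y2 :: "'a::comm_semiring_1 fps"
  assumes U0: "U $ 0 = 0" and Y1: "Y1 = A + U * Y1" and Y2: "Y2 = A + U * Y2"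
  shows "Y1 = Y2"
proof (rule fps_ext)
  fix n show "Y1 $ n = Y2 $ n"
  proof (induction n rule: less_induct)
    case (less n)
    have "(U * Y1) $ n = (U * Y2) $ n"
      unfolding fps_mult_nth
    proof (rule sum.cong[OF refl])
      fix i assume "i \<in> {0..n}"
      then show "U $ i * Y1 $ (n - i) = U $ i * Y2 $ (n - i)"
        using less.IH[of "n - i"] U0 by (cases "i = 0") auto
    qed
    then show ?case by (subst Y1, subst Y2) simp
  qed
qed

text \<open>Up to degree n, the star agrees with any partial sum of its defining series of length
  at least n, because U^k has no coefficients below degree k.\<close>

lemma fps_star_nth_partial_sum:
  assumes U0: "U $ 0 = 0" and "n \<le> N"
  shows "fps_star U $ n = (\<Sum>k\<le>N. U ^ k) $ n"
proof -
  have "(\<Sum>k\<le>N. U ^ k) $ n = (\<Sum>k\<le>N. (U ^ k) $ n)" by (rule fps_sum_nth)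
  also have "\<dots> = (\<Sum>k\<le>n. (U ^ k) $ n)"
    by (rule sum.mono_neutral_right) (use assms startsby_zero_power_prefix[OF U0] in auto)
  finally show ?thesis unfolding fps_star_def by simp
qed

text \<open>The star solves Y = 1 + U Y, and by the previous lemma it is the only solution; all
  identities between stars below are proved through this characterisation.\<close>

lemma fps_star_unfold:
  assumes U0: "U $ 0 = 0"
  shows "fps_star U = 1 + U * fps_star U"
proof (rule fps_ext)
  fix n
  have "fps_star U $ n = (\<Sum>k\<le>Suc n. U ^ k) $ n"
    by (rule fps_star_nth_partial_sum[OF U0]) simp
  also have "(\<Sum>k\<le>Suc n. U ^ k) = 1 + U * (\<Sum>k\<le>n. U ^ k)"
    by (subst sum.atMost_Suc_shift) (simp add: sum_distrib_left)
  also have "(1 + U * (\<Sum>k\<le>n. U ^ k)) $ n = (1 + U * fps_star U) $ n"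
    using fps_mult_nth_cong[of n "\<Sum>k\<le>n. U ^ k" "fps_star U" U]
    by (simp add: fps_star_nth_partial_sum[OF U0])
  finally show "fps_star U $ n = (1 + U * fps_star U) $ n" .
qed

lemma fps_star_unique:
  assumes U0: "U $ 0 = 0" and "Y = 1 + U * Y"
  shows "Y = fps_star U"
  using fps_linear_equation_unique[OF U0 assms(2) fps_star_unfold[OF U0]] .

lemma fps_star_zero: "fps_star (0::'a::comm_semiring_1 fps) = 1"
  by (rule fps_star_unique[symmetric]) simp_all

text \<open>Grouping the terms of U^* by the residue of the exponent modulo d:
  U^* = (1 + U + ... + U^(d-1)) (U^d)^*.\<close>

lemma fps_star_split:
  fixes W :: "'a::comm_semiring_1 fps"
  assumes W0: "W $ 0 = 0" and d: "d \<ge> 1"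
  shows "fps_star W = (\<Sum>i<d. W ^ i) * fps_star (W ^ d)"
proof -
  obtain d' where d': "d = Suc d'" using d by (cases d) auto
  define R where "R = (\<Sum>i<d'. W ^ i)"
  define T where "T = fps_star (W ^ d)"
  have T: "T = 1 + W ^ d * T"
    unfolding T_def using W0 d by (intro fps_star_unfold) (simp add: startsby_zero_power)
  have sum_d: "(\<Sum>i<d. W ^ i) = 1 + W * R"
    unfolding R_def d' by (subst sum.lessThan_Suc_shift) (simp add: sum_distrib_left)
  have W_sum_d: "W * (\<Sum>i<d. W ^ i) = W * R + W ^ d"
    unfolding R_def d' by (simp add: distrib_left)
  have "(\<Sum>i<d. W ^ i) * T = (1 + W ^ d * T) + W * R * T"
    by (simp only: sum_d T[symmetric]) (simp add: algebra_simps)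
  also have "\<dots> = 1 + W * ((\<Sum>i<d. W ^ i) * T)"
    by (simp add: W_sum_d algebra_simps)
  finally show ?thesis unfolding T_def by (rule fps_star_unique[OF W0, symmetric])
qed


section \<open>Geometric series in X^c\<close>

abbreviation geom :: "'a::comm_semiring_1 \<Rightarrow> nat \<Rightarrow> 'a fps" where
  "geom q c \<equiv> fps_star (fps_const q * fps_X ^ c)"

lemma monom_power: "(fps_const (q::'a::comm_semiring_1) * fps_X ^ c) ^ i = fps_const (q ^ i) * fps_X ^ (c * i)"
  by (simp add: power_mult_distrib power_mult)

lemma geom_nth:
  assumes c: "c \<ge> 1"
  shows "geom q c $ n = (if c dvd n then q ^ (n div c) else 0)"
proof -
  have "geom q c $ n = (\<Sum>k\<le>n. if n = c * k then q ^ k else 0)"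
    unfolding fps_star_def monom_power
    by (auto simp: fps_X_power_mult_nth mult.assoc intro!: sum.cong)
  also have "\<dots> = (\<Sum>k\<le>n. if c dvd n \<and> k = n div c then q ^ (n div c) else 0)"
    by (rule sum.cong) (use c in auto)
  also have "\<dots> = (if c dvd n then q ^ (n div c) else 0)"
    using c by (cases "c dvd n") auto
  finally show ?thesis .
qed

lemma geom_nth_shift: "c \<ge> 1 \<Longrightarrow> geom q c $ (n + c) = q * geom q c $ n"
  by (simp add: geom_nth)

lemma geom_split:
  assumes "c \<ge> 1" "d \<ge> 1"
  shows "geom q c = (\<Sum>i<d. fps_const (q ^ i) * fps_X ^ (c * i)) * geom (q ^ d) (c * d)"
  using fps_star_split[of "fps_const q * fps_X ^ c" d] assms by (simp add: monom_power)

lemma fps_monom_mult_nth: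
  "(fps_const u * fps_X ^ m * f) $ n = u * (if n < m then 0 else f $ (n - m))"
  by (simp add: mult.assoc fps_X_power_mult_nth)


section \<open>Elementary series\<close>

inductive elementary :: "'a::comm_semiring_1 fps \<Rightarrow> bool" where
  zero: "elementary 0"
| monom_star: "c \<ge> 1 \<Longrightarrow> elementary (fps_const u * fps_X ^ m * geom q c)"
| add: "elementary S \<Longrightarrow> elementary T \<Longrightarrow> elementary (S + T)"

lemma elementary_sum:
  "finite I \<Longrightarrow> (\<And>i. i \<in> I \<Longrightarrow> elementary (f i)) \<Longrightarrow> elementary (\<Sum>i\<in>I. f i)"
  by (induction I rule: finite_induct) (auto intro: elementary.zero elementary.add)

lemma elementary_monom_mult: "elementary S \<Longrightarrow> elementary (fps_const w * fps_X ^ k * S)"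
proof (induction S rule: elementary.induct)
  case (monom_star c u m q)
  have "fps_const w * fps_X ^ k * (fps_const u * fps_X ^ m * geom q c)
      = fps_const (w * u) * fps_X ^ (k + m) * geom q c"
    by (simp add: power_add algebra_simps flip: fps_const_mult)
  then show ?case using monom_star by (simp add: elementary.monom_star)
qed (simp_all add: elementary.intros distrib_left)

text \<open>Constants times monomials, and hence all polynomials, are elementary (take q = 0).\<close>

lemma elementary_monom: "elementary (fps_const u * fps_X ^ m)"
  using elementary.monom_star[of 1 u m 0] by (simp add: fps_star_zero)

lemma elementary_poly: "elementary (fps_of_poly p)"
proof (induction p rule: pCons_induct)
  case (pCons a p)
  have "fps_of_poly (pCons a p) = fps_const a * fps_X ^ 0 + fps_const 1 * fps_X ^ 1 * fps_of_poly p"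
    by (simp add: fps_of_poly_pCons mult.commute)
  then show ?case
    by (simp only:) (rule elementary.add[OF elementary_monom elementary_monom_mult[OF pCons(2)]])
qed (simp add: elementary.zero)

lemma elementary_one: "elementary 1"
  using elementary_monom[of 1 0] by simp

lemma elementary_geom: "c \<ge> 1 \<Longrightarrow> elementary (geom q c)"
  using elementary.monom_star[of c 1 0 q] by simp

lemma elementary_polysum_mult:
  assumes "elementary S"
  shows "elementary ((\<Sum>i<(n::nat). fps_const (a i) * fps_X ^ e i) * S)"
  unfolding sum_distrib_right by (intro elementary_sum elementary_monom_mult assms) auto

text \<open>An elementary series is a constant plus X times an elementary series.  This is what
  lets us rewrite a star argument with zero constant term as X T with T elementary.\<close>

lemma elementary_decompose:
  "elementary T \<Longrightarrow> \<exists>a T'. elementary T' \<and> T = fps_const a + fps_X * T'"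
proof (induction T rule: elementary.induct)
  case zero
  show ?case by (intro exI[of _ 0] exI[of _ 0]) (simp add: elementary.zero)
next
  case (add S T)
  then obtain a1 S' a2 T' where "elementary S'" "S = fps_const a1 + fps_X * S'"
    and "elementary T'" "T = fps_const a2 + fps_X * T'" by blast
  then show ?case
    by (intro exI[of _ "a1 + a2"] exI[of _ "S' + T'"])
      (simp add: elementary.add algebra_simps flip: fps_const_add)
next
  case (monom_star c u m q)
  show ?case
  proof (cases m)
    case 0
    obtain c' where c': "c = Suc c'" using monom_star by (cases c) auto
    have "fps_const u * fps_X ^ m * geom q c
        = fps_const u * (1 + fps_const q * fps_X ^ c * geom q c)"
      using fps_star_unfold[of "fps_const q * fps_X ^ c"] monom_star 0 by simp
    also have "\<dots> = fps_const u + fps_X * (fps_const (u * q) * fps_X ^ c' * geom q c)"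
      using c' by (simp add: algebra_simps flip: fps_const_mult)
    finally show ?thesis using elementary.monom_star[OF monom_star] by blast
  next
    case (Suc m')
    have "fps_const u * fps_X ^ m * geom q c = fps_const 0 + fps_X * (fps_const u * fps_X ^ m' * geom q c)"
      using Suc by (simp add: ac_simps)
    then show ?thesis using elementary.monom_star[OF monom_star] by blast
  qed
qed


section \<open>Closure properties in the idempotent case\<close>

context
  fixes ty :: "'a::comm_semiring_1 itself"
  assumes idem: "idempotent_sr ty"
begin

lemma fps_add_idem: "(f::'a fps) + f = f"
  using idem unfolding idempotent_sr_def by (intro fps_ext) simp

text \<open>In an idempotent commutative semiring the star turns sums into products:
  A^* B^* solves Y = 1 + (A + B) Y, the cross term A A^* B B^* being absorbed by idempotency.\<close>

lemma fps_star_add: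
  fixes A B :: "'a fps"
  assumes A0: "A $ 0 = 0" and B0: "B $ 0 = 0"
  shows "fps_star (A + B) = fps_star A * fps_star B"
proof -
  define SA where "SA = fps_star A"
  define SB where "SB = fps_star B"
  have SA: "SA = 1 + A * SA" unfolding SA_def by (rule fps_star_unfold[OF A0])
  have SB: "SB = 1 + B * SB" unfolding SB_def by (rule fps_star_unfold[OF B0])
  define X where "X = A * SA * (B * SB)"
  have "SA * SB = (1 + A * SA) * (1 + B * SB)" by (metis SA SB)
  then have prod: "SA * SB = 1 + A * SA + B * SB + X" by (simp add: X_def algebra_simps)
  have "A * SA * SB = A * SA + X"
  proof -
    have "A * SA * SB = A * SA * (1 + B * SB)" by (simp only: SB[symmetric])
    also have "\<dots> = A * SA + X" unfolding X_def by (simp add: algebra_simps)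
    finally show ?thesis .
  qed
  moreover have "B * SA * SB = B * SB + X"
  proof -
    have "B * SA * SB = B * SB * (1 + A * SA)" by (simp only: SA[symmetric] ac_simps)
    also have "\<dots> = B * SB + X" unfolding X_def by (simp add: algebra_simps)
    finally show ?thesis .
  qed
  ultimately have "1 + (A + B) * (SA * SB) = 1 + A * SA + B * SB + (X + X)"
    by (simp add: algebra_simps)
  then have "SA * SB = 1 + (A + B) * (SA * SB)"
    by (simp add: prod fps_add_idem)
  then show ?thesis unfolding SA_def SB_def using A0 B0 by (intro fps_star_unique[symmetric]) auto
qed

lemma geom_mult_self: "c \<ge> 1 \<Longrightarrow> geom (q::'a) c * geom q c = geom q c"
  using fps_star_add[of "fps_const q * fps_X ^ c" "fps_const q * fps_X ^ c"]
  by (simp add: fps_add_idem)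

text \<open>Two geometric series can be brought to the common period c d and then multiplied.\<close>

lemma geom_mult_geom:
  assumes c: "c \<ge> 1" and d: "d \<ge> 1"
  shows "geom (q::'a) c * geom p d = (\<Sum>i<d. fps_const (q ^ i) * fps_X ^ (c * i)) *
           ((\<Sum>i<c. fps_const (p ^ i) * fps_X ^ (d * i)) * geom (q ^ d + p ^ c) (c * d))"
proof -
  have cd: "c * d \<ge> 1" using c d by simp
  have q: "geom q c = (\<Sum>i<d. fps_const (q ^ i) * fps_X ^ (c * i)) * geom (q ^ d) (c * d)"
    by (rule geom_split[OF c d])
  have p: "geom p d = (\<Sum>i<c. fps_const (p ^ i) * fps_X ^ (d * i)) * geom (p ^ c) (c * d)"
    using geom_split[OF d c, of p] by (simp add: mult.commute)
  have common: "geom (q ^ d) (c * d) * geom (p ^ c) (c * d) = geom (q ^ d + p ^ c) (c * d)"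
    using fps_star_add[of "fps_const (q ^ d) * fps_X ^ (c * d)" "fps_const (p ^ c) * fps_X ^ (c * d)"] cd
    by (simp add: distrib_right flip: fps_const_add)
  have "geom q c * geom p d = (\<Sum>i<d. fps_const (q ^ i) * fps_X ^ (c * i)) *
      ((\<Sum>i<c. fps_const (p ^ i) * fps_X ^ (d * i)) * (geom (q ^ d) (c * d) * geom (p ^ c) (c * d)))"
    unfolding q p by (simp only: ac_simps)
  then show ?thesis by (simp only: common)
qed

lemma elementary_mult: "elementary S \<Longrightarrow> elementary T \<Longrightarrow> elementary ((S::'a fps) * T)"
proof (induction S rule: elementary.induct)
  case (monom_star c u m q)
  from monom_star(2) show ?case
  proof (induction T rule: elementary.induct)
    case (monom_star d v n p)
    have "fps_const u * fps_X ^ m * geom q c * (fps_const v * fps_X ^ n * geom p d)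
       = fps_const (u * v) * fps_X ^ (m + n) * (geom q c * geom p d)"
      by (simp add: power_add ac_simps flip: fps_const_mult)
    moreover have "elementary (geom q c * geom p d)"
      unfolding geom_mult_geom[OF \<open>c \<ge> 1\<close> \<open>d \<ge> 1\<close>]
      using \<open>c \<ge> 1\<close> \<open>d \<ge> 1\<close> by (intro elementary_polysum_mult elementary_geom) simp
    ultimately show ?case by (simp add: elementary_monom_mult)
  qed (simp_all add: elementary.intros distrib_left)
qed (simp_all add: elementary.intros distrib_right)

text \<open>The star of one term: with W = u X^(m+1), (W (q X^c)^*)^* = 1 + W (q X^c)^* W^*,
  since ((q X^c)^*)^2 = (q X^c)^*.\<close>

lemma elementary_star_term:
  assumes c: "c \<ge> 1"
  shows "elementary (fps_star (fps_X * (fps_const u * fps_X ^ m * geom (q::'a) c)))"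
proof -
  define W where "W = fps_const u * fps_X ^ Suc m"
  define T where "T = W * geom q c"
  have W0: "W $ 0 = 0" and T0: "T $ 0 = 0" unfolding T_def W_def by simp_all
  have W_star: "fps_star W = 1 + W * fps_star W" by (rule fps_star_unfold[OF W0])
  define Y where "Y = 1 + T * fps_star W"
  have "1 + T * Y = 1 + W * geom q c + W * W * (geom q c * geom q c) * fps_star W"
    unfolding Y_def T_def by (simp add: algebra_simps)
  also have "\<dots> = 1 + W * geom q c * (1 + W * fps_star W)"
    by (simp add: geom_mult_self[OF c] algebra_simps)
  also have "\<dots> = Y" unfolding Y_def T_def by (simp only: W_star[symmetric])
  finally have "Y = fps_star T" using fps_star_unique[OF T0] by metis
  moreover have "elementary Y"
    unfolding Y_def T_def W_def using c
    by (intro elementary.add elementary_mult elementary_monom elementary_geom elementary.monom_star)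
      (simp_all add: elementary_one)
  moreover have "fps_X * (fps_const u * fps_X ^ m * geom q c) = T"
    unfolding T_def W_def by (simp add: ac_simps)
  ultimately show ?thesis by simp
qed

text \<open>The star of X T for elementary T is elementary: stars of sums are products of stars.\<close>

lemma elementary_star: "elementary T \<Longrightarrow> elementary (fps_star (fps_X * (T::'a fps)))"
proof (induction T rule: elementary.induct)
  case zero
  show ?case by (simp add: fps_star_zero elementary_one)
next
  case (monom_star c u m q)
  then show ?case by (rule elementary_star_term)
next
  case (add S T)
  have "fps_star (fps_X * (S + T)) = fps_star (fps_X * S) * fps_star (fps_X * T)"
    unfolding distrib_left by (rule fps_star_add) simp_all
  then show ?case using add by (simp add: elementary_mult)
qed

theorem rational_imp_elementary: "rational_fps S \<Longrightarrow> elementary (S::'a fps)"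
proof (induction S rule: rational_fps.induct)
  case (poly p)
  then show ?case by (rule elementary_poly)
next
  case (plus S T)
  then show ?case by (simp add: elementary.add)
next
  case (times S T)
  then show ?case by (blast intro: elementary_mult)
next
  case (star U)
  obtain a T where "elementary T" and U: "U = fps_const a + fps_X * T"
    using elementary_decompose[OF star(3)] by blast
  moreover have "a = 0" using star(2) U by simp
  ultimately show ?case using elementary_star by simp
qed

end


section \<open>Periodically geometric series\<close>

definition ult_geom_seq :: "(nat \<Rightarrow> 'a::comm_semiring_1) \<Rightarrow> bool" where
  "ult_geom_seq x \<longleftrightarrow> (\<exists>K \<gamma>. \<forall>k\<ge>K. x (Suc k) = \<gamma> * x k)"

lemma ultimately_geometric_iff: "ultimately_geometric S \<longleftrightarrow> ult_geom_seq (fps_nth S)"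
  unfolding ultimately_geometric_def ult_geom_seq_def by simp

definition periodically_geometric :: "nat \<Rightarrow> 'a::comm_semiring_1 fps \<Rightarrow> bool" where
  "periodically_geometric c S \<longleftrightarrow> (\<forall>r<c. ult_geom_seq (\<lambda>k. S $ (r + k * c)))"

lemma ult_geom_seq_power:
  fixes x :: "nat \<Rightarrow> 'a::comm_semiring_1"
  assumes "\<forall>k\<ge>K. x (Suc k) = \<gamma> * x k" "i \<ge> K"
  shows "x (i + m) = \<gamma> ^ m * x i"
  by (induction m) (use assms in \<open>auto simp: mult.assoc\<close>)

lemma ult_geom_seq_subseq:
  assumes "ult_geom_seq x" shows "ult_geom_seq (\<lambda>k. x (j + k * d))"
proof -
  obtain K \<gamma> where x: "\<forall>k\<ge>K. x (Suc k) = \<gamma> * x k" using assms unfolding ult_geom_seq_def by blast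
  have "x (j + Suc k * d) = \<gamma> ^ d * x (j + k * d)" if "k \<ge> K" for k
  proof (cases "d = 0")
    case False
    then have "k \<le> k * d" by simp
    then have "j + k * d \<ge> K" using that by linarith
    then show ?thesis using ult_geom_seq_power[OF x, of "j + k * d" d] by (simp add: algebra_simps)
  qed simp
  then show ?thesis unfolding ult_geom_seq_def by blast
qed

lemma periodically_geometric_mult:
  assumes S: "periodically_geometric c S" and c: "c \<ge> 1"
  shows "periodically_geometric (c * d) S"
  unfolding periodically_geometric_def
proof (intro allI impI)
  fix r assume "r < c * d"
  have "ult_geom_seq (\<lambda>k. S $ (r mod c + k * c))" using S c unfolding periodically_geometric_def by simp
  then have "ult_geom_seq (\<lambda>k. S $ (r mod c + (r div c + k * d) * c))"
    using ult_geom_seq_subseq[of _ "r div c" d] by fastforce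
  moreover have "r mod c + (r div c + k * d) * c = r + k * (c * d)" for k
    by (simp add: algebra_simps)
  ultimately show "ult_geom_seq (\<lambda>k. S $ (r + k * (c * d)))" by simp
qed

lemma elementary_term_periodically_geometric:
  assumes c: "c \<ge> 1"
  shows "periodically_geometric c (fps_const u * fps_X ^ m * geom q c)"
  unfolding periodically_geometric_def ult_geom_seq_def
proof (intro allI impI exI)
  fix r k assume "m \<le> k"
  moreover have "k \<le> k * c" using c by simp
  ultimately have "m \<le> r + k * c" by linarith
  then show "(fps_const u * fps_X ^ m * geom q c) $ (r + Suc k * c)
           = q * (fps_const u * fps_X ^ m * geom q c) $ (r + k * c)"
    using geom_nth_shift[OF c, of q "r + k * c - m"]
    by (simp add: fps_monom_mult_nth add.assoc add.commute[of c] mult.left_commute)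
qed

text \<open>The natural order is compatible with multiplication: from b = a + b and y = x + y,
  b y = b x + b y = a x + (b x + b y) = a x + b y.\<close>

lemma nat_le_mult: "nat_le (a::'a::comm_semiring_1) b \<Longrightarrow> nat_le x y \<Longrightarrow> nat_le (a * x) (b * y)"
  unfolding nat_le_def by (metis add.assoc distrib_left distrib_right)

context
  fixes ty :: "'a::comm_semiring_1 itself"
  assumes idem: "idempotent_sr ty" and lin: "linearly_ordered_sr ty"
begin

lemma nat_le_total: "nat_le (u::'a) v \<or> nat_le v u"
  using lin unfolding linearly_ordered_sr_def by blast

lemma nat_le_power:
  assumes ab: "nat_le (a::'a) b" shows "nat_le (a ^ i) (b ^ i)"
proof (induction i)
  case 0
  show ?case using idem by (simp add: nat_le_def idempotent_sr_def)
next
  case (Suc i)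
  show ?case using nat_le_mult[OF ab Suc.IH] by simp
qed

text \<open>If x and y are eventually geometric with ratios a \<le> b, then either y never rises above x,
  or once x \<le> y this persists; in both cases x + y is eventually geometric.\<close>

lemma ult_geom_seq_add_ordered:
  fixes x y :: "nat \<Rightarrow> 'a"
  assumes x: "\<forall>k\<ge>K. x (Suc k) = a * x k" and y: "\<forall>k\<ge>K. y (Suc k) = b * y k"
    and ab: "nat_le a b"
  shows "ult_geom_seq (\<lambda>k. x k + y k)"
proof (cases "\<forall>k\<ge>K. nat_le (y k) (x k)")
  case True
  then have "x (Suc k) + y (Suc k) = a * (x k + y k)" if "k \<ge> K" for k
    using x that True[rule_format, of k] True[rule_format, of "Suc k"]
    by (simp add: nat_le_def add.commute)
  then show ?thesis unfolding ult_geom_seq_def by blast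
next
  case False
  then obtain k0 where k0: "k0 \<ge> K" "nat_le (x k0) (y k0)" using nat_le_total by blast
  have dom: "nat_le (x k) (y k)" if "k \<ge> k0" for k
    using ult_geom_seq_power[OF x k0(1), of "k - k0"] ult_geom_seq_power[OF y k0(1), of "k - k0"]
      nat_le_mult[OF nat_le_power[OF ab] k0(2)] that by simp
  have "x (Suc k) + y (Suc k) = b * (x k + y k)" if "k \<ge> k0" for k
    using y dom[of k] dom[of "Suc k"] that k0(1) by (simp add: nat_le_def)
  then show ?thesis unfolding ult_geom_seq_def by blast
qed

lemma ult_geom_seq_add:
  fixes x y :: "nat \<Rightarrow> 'a"
  assumes "ult_geom_seq x" "ult_geom_seq y" shows "ult_geom_seq (\<lambda>k. x k + y k)"
proof -
  obtain K1 a K2 b where "\<forall>k\<ge>K1. x (Suc k) = a * x k" "\<forall>k\<ge>K2. y (Suc k) = b * y k"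
    using assms unfolding ult_geom_seq_def by blast
  then have x: "\<forall>k\<ge>max K1 K2. x (Suc k) = a * x k" and y: "\<forall>k\<ge>max K1 K2. y (Suc k) = b * y k"
    by simp_all
  show ?thesis
    using nat_le_total[of a b] ult_geom_seq_add_ordered[OF x y] ult_geom_seq_add_ordered[OF y x]
    by (auto simp: add.commute)
qed

text \<open>Second step of the cycle: elementary series are periodically geometric (common period of the summands).\<close>

theorem elementary_periodically_geometric:
  "elementary (S::'a fps) \<Longrightarrow> \<exists>c\<ge>1. periodically_geometric c S"
proof (induction S rule: elementary.induct)
  case zero
  have "periodically_geometric 1 (0::'a fps)"
    unfolding periodically_geometric_def ult_geom_seq_def by simp
  then show ?case by blast
next
  case (monom_star c u m q)
  then show ?case using elementary_term_periodically_geometric by blast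
next
  case (add S T)
  then obtain c1 c2 where c: "c1 \<ge> 1" "c2 \<ge> 1"
    and "periodically_geometric c1 S" "periodically_geometric c2 T" by blast
  then have "periodically_geometric (c1 * c2) S" "periodically_geometric (c1 * c2) T"
    using periodically_geometric_mult[of c2 T c1] by (simp_all add: periodically_geometric_mult mult.commute)
  then have "periodically_geometric (c1 * c2) (S + T)"
    unfolding periodically_geometric_def by (simp add: ult_geom_seq_add)
  moreover have "c1 * c2 \<ge> 1" using c by simp
  ultimately show ?case by blast
qed

end


section \<open>Merges and the normal form\<close>

lemma periodically_geometric_merge:
  assumes "periodically_geometric c S"
  shows "\<exists>F. (\<forall>j<c. ultimately_geometric (F j)) \<and> S = merge_fps c F"
proof (intro exI conjI allI impI)
  define F where "F = (\<lambda>j. Abs_fps (\<lambda>k. S $ (j + k * c)))"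
  show "ultimately_geometric (F j)" if "j < c" for j
    using assms that unfolding periodically_geometric_def ult_geom_seq_def ultimately_geometric_def F_def
    by simp
  show "S = merge_fps c F"
    unfolding merge_fps_def F_def by (rule fps_ext) (simp add: mod_div_mult_eq)
qed

definition star_normal_form ::
  "nat \<Rightarrow> nat \<Rightarrow> 'a::comm_semiring_1 poly \<Rightarrow> (nat \<Rightarrow> 'a) \<Rightarrow> (nat \<Rightarrow> 'a) \<Rightarrow> 'a fps" where
  "star_normal_form \<kappa> c P u q = fps_of_poly P + fps_X ^ (\<kappa> * c) *
     (\<Sum>i<c. fps_const (u i) * fps_X ^ i * fps_star (fps_const (q i) * fps_X ^ c))"

text \<open>In the sum, the coefficient of X^m only comes from the summand with i = m mod c.\<close>

lemma geom_comb_nth: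
  assumes c: "c \<ge> 1"
  shows "(\<Sum>i<c. fps_const (u i) * fps_X ^ i * geom (q i) c) $ m
       = u (m mod c) * q (m mod c) ^ (m div c)"
proof -
  have summand: "(if m < i then 0 else geom (q i) c $ (m - i))
      = (if i = m mod c then q i ^ (m div c) else 0)" if "i < c" for i
  proof (cases "i = m mod c")
    case True
    then have "m - i = c * (m div c)" by (metis minus_mod_eq_mult_div)
    then show ?thesis using True c by (simp add: geom_nth) (metis leD mod_less_eq_dividend)
  next
    case False
    have "\<not> (i \<le> m \<and> c dvd (m - i))"
    proof
      assume "i \<le> m \<and> c dvd (m - i)"
      then obtain t where "m = i + c * t" by (metis dvd_def le_add_diff_inverse)
      then show False using False that by simp
    qed
    then show ?thesis using False c by (auto simp: geom_nth)
  qed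
  have "(\<Sum>i<c. fps_const (u i) * fps_X ^ i * geom (q i) c) $ m
      = (\<Sum>i<c. if i = m mod c then u i * q i ^ (m div c) else 0)"
    unfolding fps_sum_nth fps_monom_mult_nth by (rule sum.cong) (simp_all add: summand)
  also have "\<dots> = u (m mod c) * q (m mod c) ^ (m div c)"
    using c by (subst sum.delta) auto
  finally show ?thesis .
qed

lemma star_normal_form_nth:
  assumes c: "c \<ge> 1" and P: "\<forall>n\<ge>\<kappa> * c. coeff P n = 0"
  shows "star_normal_form \<kappa> c P u q $ n =
           (if n < \<kappa> * c then coeff P n
            else u ((n - \<kappa> * c) mod c) * q ((n - \<kappa> * c) mod c) ^ ((n - \<kappa> * c) div c))"
  using P unfolding star_normal_form_def by (simp add: fps_X_power_mult_nth geom_comb_nth[OF c])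

text \<open>Beyond a common threshold \<kappa>, each of the c merged series is geometric; the coefficients
  below \<kappa> c form the polynomial P.\<close>

theorem merge_star_normal_form:
  assumes c: "c \<ge> 1" and F: "\<forall>j<c. ultimately_geometric (F j)"
  shows "\<exists>\<kappa> P u q. (\<forall>n\<ge>\<kappa> * c. coeff P n = 0) \<and> merge_fps c F = star_normal_form \<kappa> c P u q"
proof -
  obtain K \<gamma> where K: "\<And>j. j < c \<Longrightarrow> \<forall>k\<ge>K j. F j $ (Suc k) = \<gamma> j * F j $ k"
    using F unfolding ultimately_geometric_iff ult_geom_seq_def by metis
  define \<kappa> where "\<kappa> = (\<Sum>j<c. K j)"
  have geo: "F j $ (\<kappa> + k) = \<gamma> j ^ k * F j $ \<kappa>" if "j < c" for j k
    using ult_geom_seq_power[OF K[OF that], of \<kappa> k] that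
    unfolding \<kappa>_def by (simp add: member_le_sum)
  define S where "S = merge_fps c F"
  define P where "P = Poly (map (\<lambda>n. S $ n) [0..<\<kappa> * c])"
  have coeff_P: "coeff P n = (if n < \<kappa> * c then S $ n else 0)" for n
    by (simp add: P_def nth_default_def)
  have "S = star_normal_form \<kappa> c P (\<lambda>i. F i $ \<kappa>) \<gamma>"
  proof (rule fps_ext)
    fix n
    show "S $ n = star_normal_form \<kappa> c P (\<lambda>i. F i $ \<kappa>) \<gamma> $ n"
    proof (cases "n < \<kappa> * c")
      case False
      define m where "m = n - \<kappa> * c"
      have n: "n = m + \<kappa> * c" using False unfolding m_def by simp
      have "n mod c = m mod c" "n div c = \<kappa> + m div c"
        using c by (simp_all add: n)
      then show ?thesis
        using False geo[of "m mod c" "m div c"] c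
        by (simp add: star_normal_form_nth coeff_P S_def merge_fps_def m_def[symmetric] mult.commute)
    qed (simp add: star_normal_form_nth[OF c] coeff_P)
  qed
  moreover have "\<forall>n\<ge>\<kappa> * c. coeff P n = 0" by (simp add: coeff_P)
  ultimately show ?thesis unfolding S_def by blast
qed

lemma rational_monom: "rational_fps (fps_const (u::'a::comm_semiring_1) * fps_X ^ m)"
proof -
  have "fps_of_poly (monom u m) = fps_const u * fps_X ^ m"
    by (rule fps_ext) simp
  then show ?thesis using rational_fps.poly[of "monom u m"] by simp
qed

lemma rational_sum:
  "finite I \<Longrightarrow> (\<And>i. i \<in> I \<Longrightarrow> rational_fps (f i)) \<Longrightarrow> rational_fps (\<Sum>i\<in>I. f i)"
  by (induction I rule: finite_induct) (use rational_fps.poly[of 0] in \<open>auto intro: rational_fps.plus\<close>)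

lemma star_normal_form_rational:
  "c \<ge> 1 \<Longrightarrow> rational_fps (star_normal_form \<kappa> c P u q)"
  unfolding star_normal_form_def
  by (intro rational_fps.plus rational_fps.poly rational_fps.times rational_sum
      rational_fps.star rational_monom[of 1, simplified] rational_monom) simp_all


theorem theorem3:
  fixes S :: "'a::comm_semiring_1 fps"
  assumes "idempotent_sr TYPE('a)"
    and "linearly_ordered_sr TYPE('a)"
    and "archimedian_sr TYPE('a)"
  shows "(rational_fps S \<longleftrightarrow>
           (\<exists>c\<ge>1. \<exists>F. (\<forall>j<c. ultimately_geometric (F j)) \<and> S = merge_fps c F))
       \<and> (rational_fps S \<longleftrightarrow>
           (\<exists>(\<kappa>::nat) (c::nat) (P::'a poly) (u::nat \<Rightarrow> 'a) (q::nat \<Rightarrow> 'a).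
              c \<ge> 1 \<and> (\<forall>n\<ge>\<kappa> * c. coeff P n = 0) \<and>
              S = fps_of_poly P + fps_X ^ (\<kappa> * c) *
                    (\<Sum>i<c. fps_const (u i) * fps_X ^ i * fps_star (fps_const (q i) * fps_X ^ c))))"
proof -
  let ?merge = "\<exists>c\<ge>1. \<exists>F. (\<forall>j<c. ultimately_geometric (F j)) \<and> S = merge_fps c F"
  let ?normal = "\<exists>\<kappa> c P u q. c \<ge> 1 \<and> (\<forall>n\<ge>\<kappa> * c. coeff P n = 0) \<and> S = star_normal_form \<kappa> c P u q"
  have rational_merge: ?merge if rational: "rational_fps S"
  proof -
    obtain c where "c \<ge> 1" "periodically_geometric c S"
      using elementary_periodically_geometric[OF assms(1,2) rational_imp_elementary[OF assms(1) rational]]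
      by blast
    then show ?thesis using periodically_geometric_merge by blast
  qed
  have merge_normal: ?normal if merge: ?merge
  proof -
    obtain c F where "c \<ge> 1" "\<forall>j<c. ultimately_geometric (F j)" "S = merge_fps c F"
      using merge by blast
    then show ?thesis using merge_star_normal_form[of c F] by blast
  qed
  have normal_rational: "rational_fps S" if ?normal
    using that star_normal_form_rational by blast
  have "(rational_fps S \<longleftrightarrow> ?merge) \<and> (rational_fps S \<longleftrightarrow> ?normal)"
    using rational_merge merge_normal normal_rational by blast
  then show ?thesis unfolding star_normal_form_def .
qed

end
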